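(* Let $(\mathfrak{g},V,\Theta)$ be a Lie-Leibniz triple with associated graded Lie algebra $T_{\leq-1}$. Then $m\circ q+q\circ m=0$ as maps $\Lambda^3(T_{\leq-1})\to T_{\leq-1}$; that is, for every $i\geq1$ the maps $m\circ q$ and $-q\circ m$ from $\Lambda^3(T_{\leq-1})|_{-i-2}$ to $T_{-i-1}$ coincide.
   Context: A (left) Leibniz algebra is a vector space $V$ with bilinear $\circ$ satisfying $x\circ(y\circ z)=(x\circ y)\circ z+y\circ(x\circ z)$; $\{x,y\}=\frac12(x\circ y+y\circ x)$. A Lie-Leibniz triple $(\mathfrak{g},V,\Theta)$ consists of a Lie algebra $\mathfrak{g}$, a $\mathfrak{g}$-module $V$ (action $a\cdot x$) with a Leibniz product $\circ$, and a linear map $\Theta:V\to\mathfrak{g}$ with $x\circ y=\Theta(x)\cdot y$ and $\Theta(x\circ y)=[\Theta(x),\Theta(y)]$. Associated graded Lie algebra: let $K$ be the largest $\mathfrak{g}$-submodule of $S^2(V)$ contained in the kernel of $x\odot y\mapsto\{x,y\}$; let $F$ be the free graded Lie algebra on $V[1]$ (degree $-1$), $F_{-2}\cong S^2(V)$, with $\mathfrak g$ acting by derivations; $K_{-2}=K$, $K_{-i}=\sum_{j=1}^{i-2}[F_{-j},K_{-i+j}]$ ($i\geq3$); $T_{\leq-1}=F/K_\bullet$, $T_{-1}=V[1]$, with induced bracket $\llbracket\,.\,,.\,\rrbracket$ and $\mathfrak g$-action. $\Lambda^\bullet(T_{\leq-1})$ is the graded exterior algebra ($x\wedge y=-(-1)^{|x||y|}y\wedge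 x$), $|_{-i}$ the total-degree $-i$ part. Define $q:\Lambda^2(T_{\leq-1})\to T_{\leq-1}$ by $q(x\wedge y)=\llbracket x,y\rrbracket$ and $m:\Lambda^2(T_{\leq-1})\to T_{\leq-1}$ by $m(x\wedge y)=\Theta(x)\cdot y-(-1)^{|x||y|}\Theta(y)\cdot x$, where $\Theta$ is taken to be $0$ on $T_{\leq-2}$ (so $m(u\wedge v)=2\{u,v\}$ for $u,v\in T_{-1}$, $m(u\wedge x)=\Theta(u)\cdot x$ for $u\in T_{-1}$, $x\in T_{\leq -2}$, and $m=0$ on $\Lambda^2(T_{\leq-2})$). Both extend to $\Lambda^p$ ($p\geq3$) by $f(x_1\wedge\cdots\wedge x_p)=\sum_{\sigma\in\mathrm{Un}(2,p-2)}\epsilon^\sigma f(x_{\sigma(1)}\wedge x_{\sigma(2)})\wedge x_{\sigma(3)}\wedge\cdots\wedge x_{\sigma(p)}$, with $\mathrm{Un}(2,p-2)$ the $(2,p-2)$-unshuffles and $\epsilon^\sigma$ the Koszul sign. *)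

theory Defs
  imports Complex_Main
begin

text \<open>
  The vector space V is modelled through a basis
  indexed by the type 'b: V = finitely supported functions 'b => 'k.
  Tensors (elements of the tensor algebra of V) are finitely supported functions
  'b list => 'k; a tensor is of tensor degree n if it is supported on words of length n.
  The free graded Lie algebra F on V[1] (generators in degree -1) is realised as the
  graded Lie subalgebra of the tensor algebra generated by V, with the graded
  commutator; FL n is its component F_{-n}.
\<close>

definition fsupp :: "('a \<Rightarrow> 'k::zero) \<Rightarrow> bool" where
  "fsupp f \<longleftrightarrow> finite {x. f x \<noteq> 0}"

definition delta :: "'b \<Rightarrow> 'b \<Rightarrow> 'k::{zero,one}" where
  "delta c = (\<lambda>b. if b = c then 1 else 0)"

definition lie_algebra :: "('k::field \<Rightarrow> 'g::ab_group_add \<Rightarrow> 'g) \<Rightarrow> ('g \<Rightarrow> 'g \<Rightarrow> 'g) \<Rightarrow> bool" where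
  "lie_algebra sc br \<longleftrightarrow> vector_space sc
     \<and> (\<forall>a b c. br (a + b) c = br a c + br b c)
     \<and> (\<forall>a b c. br a (b + c) = br a b + br a c)
     \<and> (\<forall>k a b. br (sc k a) b = sc k (br a b))
     \<and> (\<forall>k a b. br a (sc k b) = sc k (br a b))
     \<and> (\<forall>a. br a a = 0)
     \<and> (\<forall>a b c. br a (br b c) + br b (br c a) + br c (br a b) = 0)"

definition lie_module :: "('k::field \<Rightarrow> 'g::ab_group_add \<Rightarrow> 'g) \<Rightarrow> ('g \<Rightarrow> 'g \<Rightarrow> 'g)
     \<Rightarrow> ('g \<Rightarrow> ('b \<Rightarrow> 'k) \<Rightarrow> ('b \<Rightarrow> 'k)) \<Rightarrow> bool" where
  "lie_module sc br act \<longleftrightarrow>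
       (\<forall>a v. fsupp v \<longrightarrow> fsupp (act a v))
     \<and> (\<forall>a u v. fsupp u \<longrightarrow> fsupp v \<longrightarrow> act a (\<lambda>b. u b + v b) = (\<lambda>b. act a u b + act a v b))
     \<and> (\<forall>a c v. fsupp v \<longrightarrow> act a (\<lambda>b. c * v b) = (\<lambda>b. c * act a v b))
     \<and> (\<forall>a a' v. fsupp v \<longrightarrow> act (a + a') v = (\<lambda>b. act a v b + act a' v b))
     \<and> (\<forall>c a v. fsupp v \<longrightarrow> act (sc c a) v = (\<lambda>b. c * act a v b))
     \<and> (\<forall>a a' v. fsupp v \<longrightarrow> act (br a a') v = (\<lambda>b. act a (act a' v) b - act a' (act a v) b))"

definition leib :: "('g \<Rightarrow> ('b \<Rightarrow> 'k) \<Rightarrow> ('b \<Rightarrow> 'k)) \<Rightarrow> (('b \<Rightarrow> 'k) \<Rightarrow> 'g)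
     \<Rightarrow> ('b \<Rightarrow> 'k) \<Rightarrow> ('b \<Rightarrow> 'k) \<Rightarrow> ('b \<Rightarrow> 'k)" where
  "leib act Th x y = act (Th x) y"

definition lie_leibniz_triple :: "('k::field \<Rightarrow> 'g::ab_group_add \<Rightarrow> 'g) \<Rightarrow> ('g \<Rightarrow> 'g \<Rightarrow> 'g)
     \<Rightarrow> ('g \<Rightarrow> ('b \<Rightarrow> 'k) \<Rightarrow> ('b \<Rightarrow> 'k)) \<Rightarrow> (('b \<Rightarrow> 'k) \<Rightarrow> 'g) \<Rightarrow> bool" where
  "lie_leibniz_triple sc br act Th \<longleftrightarrow>
       lie_algebra sc br \<and> lie_module sc br act
     \<and> (\<forall>u v. fsupp u \<longrightarrow> fsupp v \<longrightarrow> Th (\<lambda>b. u b + v b) = Th u + Th v)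
     \<and> (\<forall>c v. fsupp v \<longrightarrow> Th (\<lambda>b. c * v b) = sc c (Th v))
     \<and> (\<forall>x y z. fsupp x \<longrightarrow> fsupp y \<longrightarrow> fsupp z \<longrightarrow>
            leib act Th x (leib act Th y z)
              = (\<lambda>b. leib act Th (leib act Th x y) z b + leib act Th y (leib act Th x z) b))
     \<and> (\<forall>x y. fsupp x \<longrightarrow> fsupp y \<longrightarrow> Th (leib act Th x y) = br (Th x) (Th y))"

definition emb :: "('b \<Rightarrow> 'k::zero) \<Rightarrow> ('b list \<Rightarrow> 'k)" where
  "emb v = (\<lambda>w. if length w = 1 then v (hd w) else 0)"

definition tmul :: "('b list \<Rightarrow> 'k::comm_ring_1) \<Rightarrow> ('b list \<Rightarrow> 'k) \<Rightarrow> ('b list \<Rightarrow> 'k)" where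
  "tmul s t = (\<lambda>w. \<Sum>k\<le>length w. s (take k w) * t (drop k w))"

definition gcomm :: "nat \<Rightarrow> nat \<Rightarrow> ('b list \<Rightarrow> 'k::comm_ring_1) \<Rightarrow> ('b list \<Rightarrow> 'k) \<Rightarrow> ('b list \<Rightarrow> 'k)" where
  "gcomm p q s t = (\<lambda>w. tmul s t w - (-1) ^ (p * q) * tmul t s w)"

inductive FL :: "nat \<Rightarrow> ('b list \<Rightarrow> 'k::comm_ring_1) \<Rightarrow> bool" where
  gen: "fsupp v \<Longrightarrow> FL 1 (emb v)"
| add: "FL n s \<Longrightarrow> FL n t \<Longrightarrow> FL n (\<lambda>w. s w + t w)"
| scale: "FL n s \<Longrightarrow> FL n (\<lambda>w. c * s w)"
| brk: "FL p s \<Longrightarrow> FL q t \<Longrightarrow> FL (p + q) (gcomm p q s t)"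

text \<open>g acts on tensors by derivations extending the action on V.\<close>
definition gact :: "('g \<Rightarrow> ('b \<Rightarrow> 'k) \<Rightarrow> ('b \<Rightarrow> 'k)) \<Rightarrow> 'g \<Rightarrow> ('b list \<Rightarrow> 'k::comm_ring_1) \<Rightarrow> ('b list \<Rightarrow> 'k)" where
  "gact act a t = (\<lambda>w. \<Sum>i<length w. \<Sum>c\<in>{c. t (w[i := c]) \<noteq> 0}. t (w[i := c]) * act a (delta c) (w ! i))"

text \<open>The map F_{-2} = S^2(V) -> V, [u,v] = uv + vu |-> {u,v}.\<close>
definition phi :: "('g \<Rightarrow> ('b \<Rightarrow> 'k) \<Rightarrow> ('b \<Rightarrow> 'k)) \<Rightarrow> (('b \<Rightarrow> 'k) \<Rightarrow> 'g) \<Rightarrow> ('b list \<Rightarrow> 'k::field) \<Rightarrow> ('b \<Rightarrow> 'k)" where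
  "phi act Th t = (\<lambda>b. (1/2) * (\<Sum>(b1, b2)\<in>{(b1, b2). t [b1, b2] \<noteq> 0}.
                         t [b1, b2] * leib act Th (delta b1) (delta b2) b))"

definition K2 :: "('g \<Rightarrow> ('b \<Rightarrow> 'k) \<Rightarrow> ('b \<Rightarrow> 'k)) \<Rightarrow> (('b \<Rightarrow> 'k) \<Rightarrow> 'g) \<Rightarrow> ('b list \<Rightarrow> 'k::field) set" where
  "K2 act Th = \<Union>{W. W \<subseteq> {t. FL 2 t} \<and> (\<lambda>w. 0) \<in> W
        \<and> (\<forall>s\<in>W. \<forall>t\<in>W. (\<lambda>w. s w + t w) \<in> W)
        \<and> (\<forall>c. \<forall>s\<in>W. (\<lambda>w. c * s w) \<in> W)
        \<and> (\<forall>a. \<forall>s\<in>W. gact act a s \<in> W)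
        \<and> (\<forall>s\<in>W. phi act Th s = (\<lambda>b. 0))}"

inductive KS :: "('g \<Rightarrow> ('b \<Rightarrow> 'k) \<Rightarrow> ('b \<Rightarrow> 'k)) \<Rightarrow> (('b \<Rightarrow> 'k) \<Rightarrow> 'g) \<Rightarrow> nat \<Rightarrow> ('b list \<Rightarrow> 'k::field) \<Rightarrow> bool"
  for act Th where
  base: "t \<in> K2 act Th \<Longrightarrow> KS act Th 2 t"
| zero: "KS act Th n (\<lambda>w. 0)"
| add: "KS act Th n s \<Longrightarrow> KS act Th n t \<Longrightarrow> KS act Th n (\<lambda>w. s w + t w)"
| scale: "KS act Th n s \<Longrightarrow> KS act Th n (\<lambda>w. c * s w)"
| brk: "FL j s \<Longrightarrow> 1 \<le> j \<Longrightarrow> KS act Th n t \<Longrightarrow> 2 \<le> n \<Longrightarrow> KS act Th (j + n) (gcomm j n s t)"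

definition thet :: "(('b \<Rightarrow> 'k) \<Rightarrow> 'g::zero) \<Rightarrow> nat \<Rightarrow> ('b list \<Rightarrow> 'k) \<Rightarrow> 'g" where
  "thet Th p s = (if p = 1 then Th (\<lambda>b. s [b]) else 0)"

definition qq :: "nat \<Rightarrow> nat \<Rightarrow> ('b list \<Rightarrow> 'k::comm_ring_1) \<Rightarrow> ('b list \<Rightarrow> 'k) \<Rightarrow> ('b list \<Rightarrow> 'k)" where
  "qq p q s t = gcomm p q s t"

definition mm :: "('g::zero \<Rightarrow> ('b \<Rightarrow> 'k) \<Rightarrow> ('b \<Rightarrow> 'k)) \<Rightarrow> (('b \<Rightarrow> 'k) \<Rightarrow> 'g)
     \<Rightarrow> nat \<Rightarrow> nat \<Rightarrow> ('b list \<Rightarrow> 'k::comm_ring_1) \<Rightarrow> ('b list \<Rightarrow> 'k) \<Rightarrow> ('b list \<Rightarrow> 'k)" where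
  "mm act Th p q s t = (\<lambda>w. gact act (thet Th p s) t w - (-1) ^ (p * q) * gact act (thet Th q t) s w)"

text \<open>(G \<circ> F)(x1 \<and> x2 \<and> x3) where F is extended to \<Lambda>^3 by the unshuffle formula
  (Koszul signs of the graded exterior algebra) and d is the degree shift of F
  (d = 1 for m, 0 for q); xi has degree -pi.\<close>
definition comp3 :: "(nat \<Rightarrow> nat \<Rightarrow> ('b list \<Rightarrow> 'k::comm_ring_1) \<Rightarrow> ('b list \<Rightarrow> 'k) \<Rightarrow> ('b list \<Rightarrow> 'k)) \<Rightarrow> nat
     \<Rightarrow> (nat \<Rightarrow> nat \<Rightarrow> ('b list \<Rightarrow> 'k) \<Rightarrow> ('b list \<Rightarrow> 'k) \<Rightarrow> ('b list \<Rightarrow> 'k))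
     \<Rightarrow> nat \<Rightarrow> nat \<Rightarrow> nat \<Rightarrow> ('b list \<Rightarrow> 'k) \<Rightarrow> ('b list \<Rightarrow> 'k) \<Rightarrow> ('b list \<Rightarrow> 'k) \<Rightarrow> ('b list \<Rightarrow> 'k)" where
  "comp3 F d G p1 p2 p3 x1 x2 x3 = (\<lambda>w.
       G (p1 + p2 - d) p3 (F p1 p2 x1 x2) x3 w
     + (- ((-1) ^ (p2 * p3))) * G (p1 + p3 - d) p2 (F p1 p3 x1 x3) x2 w
     + (-1) ^ (p1 * (p2 + p3)) * G (p2 + p3 - d) p1 (F p2 p3 x2 x3) x1 w)"

end

theory Submission imports Defs begin

(* Since \<Theta> vanishes on F_{\<le>-2}, on x1 \<and> x2 \<and> x3 the map m only lets \<Theta>(x_i) act for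
   generators x_i of degree -1.  The g-action on F is by derivations of the graded bracket, so
   in m \<circ> q the action of \<Theta>(x3) on [x1,x2] splits into [\<Theta>(x3).x1, x2] + [x1, \<Theta>(x3).x2],
   and these two terms cancel, by graded antisymmetry of the bracket, against the two terms of
   q \<circ> m in which \<Theta>(x3) acts on x1 or on x2; likewise for x1 and x2.  Hence m \<circ> q + q \<circ> m
   vanishes already on the free Lie algebra F, and in particular lies in K. *)

definition letters :: "('b list \<Rightarrow> 'k::zero) \<Rightarrow> 'b set" where
  "letters s = \<Union> (set ` {w. s w \<noteq> 0})"

lemma finite_letters: "fsupp s \<Longrightarrow> finite (letters s)"
  unfolding letters_def fsupp_def by auto

lemma set_subset_letters: "s w \<noteq> 0 \<Longrightarrow> set w \<subseteq> letters s"
  unfolding letters_def by auto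

lemma tmul_nonzero_split:
  "tmul s t w \<noteq> 0 \<Longrightarrow> \<exists>k. s (take k w) \<noteq> 0 \<and> t (drop k w) \<noteq> 0"
  unfolding tmul_def by (metis (no_types, lifting) mult_not_zero sum.neutral)

lemma fsupp_tmul:
  assumes "fsupp s" "fsupp t"
  shows "fsupp (tmul s t)"
proof -
  have "{w. tmul s t w \<noteq> 0} \<subseteq> (\<lambda>(u, v). u @ v) ` ({u. s u \<noteq> 0} \<times> {v. t v \<noteq> 0})"
  proof
    fix w assume "w \<in> {w. tmul s t w \<noteq> 0}"
    then obtain k where "s (take k w) \<noteq> 0" "t (drop k w) \<noteq> 0"
      using tmul_nonzero_split by blast
    then show "w \<in> (\<lambda>(u, v). u @ v) ` ({u. s u \<noteq> 0} \<times> {v. t v \<noteq> 0})"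
      by (auto intro!: image_eqI[where x = "(take k w, drop k w)"])
  qed
  then show ?thesis
    using assms unfolding fsupp_def by (meson finite_SigmaI finite_imageI finite_subset)
qed

lemma letters_tmul: "letters (tmul s t) \<subseteq> letters s \<union> letters t"
proof
  fix x assume "x \<in> letters (tmul s t)"
  then obtain w where w: "tmul s t w \<noteq> 0" "x \<in> set w"
    unfolding letters_def by auto
  then obtain k where "s (take k w) \<noteq> 0" "t (drop k w) \<noteq> 0"
    using tmul_nonzero_split by blast
  moreover have "x \<in> set (take k w) \<or> x \<in> set (drop k w)"
    using w(2) by (metis Un_iff append_take_drop_id set_append)
  ultimately show "x \<in> letters s \<union> letters t"
    using set_subset_letters by blast
qed

lemma tmul_diff_scaled_left: "tmul (\<lambda>w. s w - c * s' w) t w = tmul s t w - c * tmul s' t w"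
  unfolding tmul_def by (simp add: algebra_simps sum_subtractf sum_distrib_left)

lemma tmul_diff_scaled_right: "tmul s (\<lambda>w. t w - c * t' w) w = tmul s t w - c * tmul s t' w"
  unfolding tmul_def by (simp add: algebra_simps sum_subtractf sum_distrib_left)

lemma tmul_zero_left [simp]: "tmul (\<lambda>w. 0) t = (\<lambda>w. 0)"
  unfolding tmul_def by simp

lemma tmul_zero_right [simp]: "tmul s (\<lambda>w. 0) = (\<lambda>w. 0)"
  unfolding tmul_def by simp

lemma fsupp_diff_scaled:
  "fsupp s \<Longrightarrow> fsupp t \<Longrightarrow> fsupp (\<lambda>w. s w - (c::'k::comm_ring_1) * t w)"
  unfolding fsupp_def
  by (rule finite_subset[of _ "{x. s x \<noteq> 0} \<union> {x. t x \<noteq> 0}"]) auto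

lemma fsupp_delta: "fsupp (delta c :: 'b \<Rightarrow> 'k::zero_neq_one)"
  unfolding fsupp_def delta_def by (rule finite_subset[of _ "{c}"]) auto

lemma gact_eq_sum_over_alphabet:
  assumes "finite C" "\<And>w. t w \<noteq> 0 \<Longrightarrow> set w \<subseteq> C"
  shows "gact act a t w = (\<Sum>i<length w. \<Sum>c\<in>C. t (w[i := c]) * act a (delta c) (w ! i))"
  unfolding gact_def
proof (rule sum.cong[OF refl])
  fix i assume "i \<in> {..<length w}"
  then have "{c. t (w[i := c]) \<noteq> 0} \<subseteq> C"
    using assms(2) set_update_memI by fastforce
  then show "(\<Sum>c | t (w[i := c]) \<noteq> 0. t (w[i := c]) * act a (delta c) (w ! i))
      = (\<Sum>c\<in>C. t (w[i := c]) * act a (delta c) (w ! i))"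
    by (intro sum.mono_neutral_left[OF assms(1)]) auto
qed

lemma gact_diff_scaled:
  assumes "fsupp s" "fsupp t"
  shows "gact act a (\<lambda>w. s w - c * t w) w = gact act a s w - c * gact act a t w"
proof -
  let ?C = "letters s \<union> letters t"
  have C: "finite ?C"
    using assms finite_letters by blast
  have st: "set w \<subseteq> ?C" if "s w - c * t w \<noteq> 0" for w
    using that set_subset_letters by (metis le_supI1 le_supI2 mult_zero_right diff_self)
  have s: "set w \<subseteq> ?C" if "s w \<noteq> 0" for w
    using set_subset_letters[of s, OF that] by blast
  have t: "set w \<subseteq> ?C" if "t w \<noteq> 0" for w
    using set_subset_letters[of t, OF that] by blast
  have "gact act a (\<lambda>w. s w - c * t w) w
      = (\<Sum>i<length w. \<Sum>b\<in>?C. (s (w[i := b]) - c * t (w[i := b])) * act a (delta b) (w ! i))"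
    by (rule gact_eq_sum_over_alphabet[OF C st])
  also have "\<dots> = gact act a s w - c * gact act a t w"
    by (simp add: gact_eq_sum_over_alphabet[OF C s] gact_eq_sum_over_alphabet[OF C t]
        sum_subtractf sum_distrib_left algebra_simps)
  finally show ?thesis .
qed

lemma sum_letter_updates_take_drop:
  fixes s t :: "'b list \<Rightarrow> 'k::comm_semiring_1"
  assumes "k \<le> length w"
  shows "(\<Sum>i<length w. \<Sum>c\<in>C. s (take k (w[i := c])) * t (drop k (w[i := c])) * A c (w ! i))
    = (\<Sum>i<k. \<Sum>c\<in>C. s ((take k w)[i := c]) * A c (take k w ! i)) * t (drop k w)
      + s (take k w) * (\<Sum>j<length w - k. \<Sum>c\<in>C. t ((drop k w)[j := c]) * A c (drop k w ! j))"
    (is "sum ?g _ = _")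
proof -
  have split: "{..<length w} = {..<k} \<union> {k..<length w}"
    using assms by auto
  have "sum ?g {..<length w} = sum ?g {..<k} + sum ?g {k..<length w}"
    unfolding split by (rule sum.union_disjoint) auto
  also have "sum ?g {..<k}
      = (\<Sum>i<k. \<Sum>c\<in>C. s ((take k w)[i := c]) * A c (take k w ! i)) * t (drop k w)"
    by (auto simp: sum_distrib_left sum_distrib_right take_update_swap ac_simps intro!: sum.cong)
  also have "sum ?g {k..<length w} = (\<Sum>j<length w - k. ?g (j + k))"
    using sum.shift_bounds_nat_ivl[of ?g 0 k "length w - k"] assms
    by (simp add: atLeast0LessThan)
  also have "\<dots> = s (take k w) * (\<Sum>j<length w - k. \<Sum>c\<in>C. t ((drop k w)[j := c]) * A c (drop k w ! j))"
    using assms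
    by (auto simp: sum_distrib_left drop_update_swap add.commute ac_simps intro!: sum.cong)
  finally show ?thesis .
qed

lemma gact_tmul:
  assumes "fsupp s" "fsupp t"
  shows "gact act a (tmul s t) w = tmul (gact act a s) t w + tmul s (gact act a t) w"
proof -
  let ?C = "letters s \<union> letters t"
  let ?A = "\<lambda>c. act a (delta c)"
  have C: "finite ?C"
    using assms finite_letters by blast
  have s: "set w \<subseteq> ?C" if "s w \<noteq> 0" for w
    using set_subset_letters[of s, OF that] by blast
  have t: "set w \<subseteq> ?C" if "t w \<noteq> 0" for w
    using set_subset_letters[of t, OF that] by blast
  have st: "set w \<subseteq> ?C" if "tmul s t w \<noteq> 0" for w
    using set_subset_letters[of "tmul s t", OF that] letters_tmul by (rule order_trans)
  have "gact act a (tmul s t) w = (\<Sum>i<length w. \<Sum>c\<in>?C. tmul s t (w[i := c]) * ?A c (w ! i))"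
    by (rule gact_eq_sum_over_alphabet[OF C st])
  also have "\<dots> = (\<Sum>i<length w. \<Sum>c\<in>?C. \<Sum>k\<le>length w.
      s (take k (w[i := c])) * t (drop k (w[i := c])) * ?A c (w ! i))"
    by (simp add: tmul_def sum_distrib_right)
  also have "\<dots> = (\<Sum>k\<le>length w. \<Sum>i<length w. \<Sum>c\<in>?C.
      s (take k (w[i := c])) * t (drop k (w[i := c])) * ?A c (w ! i))"
    unfolding sum.swap[of _ ?C "{..length w}"] sum.swap[of _ "{..<length w}" "{..length w}"] ..
  also have "\<dots> = tmul (gact act a s) t w + tmul s (gact act a t) w"
    unfolding tmul_def sum.distrib[symmetric]
  proof (rule sum.cong[OF refl])
    fix k assume "k \<in> {..length w}"
    then show "(\<Sum>i<length w. \<Sum>c\<in>?C. s (take k (w[i := c])) * t (drop k (w[i := c])) * ?A c (w ! i))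
      = gact act a s (take k w) * t (drop k w) + s (take k w) * gact act a t (drop k w)"
      by (simp add: sum_letter_updates_take_drop[where A = ?A] gact_eq_sum_over_alphabet[OF C s]
          gact_eq_sum_over_alphabet[OF C t])
  qed
  finally show ?thesis .
qed

lemma gcomm_swap: "gcomm q p t s w = - ((-1) ^ (p * q)) * gcomm p q s t w"
  unfolding gcomm_def by (simp add: algebra_simps mult.commute[of q p])

lemma gcomm_diff_scaled_left:
  "gcomm p q (\<lambda>w. s w - c * s' w) t w = gcomm p q s t w - c * gcomm p q s' t w"
  unfolding gcomm_def tmul_diff_scaled_left tmul_diff_scaled_right by (simp add: algebra_simps)

lemma gcomm_zero_left [simp]: "gcomm p q (\<lambda>w. 0) t = (\<lambda>w. 0)"
  unfolding gcomm_def by simp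

lemma gcomm_zero_right [simp]: "gcomm p q s (\<lambda>w. 0) = (\<lambda>w. 0)"
  unfolding gcomm_def by simp

lemma gact_gcomm:
  assumes "fsupp s" "fsupp t"
  shows "gact act a (gcomm p q s t) w = gcomm p q (gact act a s) t w + gcomm p q s (gact act a t) w"
  unfolding gcomm_def gact_diff_scaled[OF fsupp_tmul[OF assms] fsupp_tmul[OF assms(2,1)]]
  by (simp add: gact_tmul assms algebra_simps)

lemma FL_fsupp: "FL n s \<Longrightarrow> fsupp s"
proof (induction rule: FL.induct)
  case (gen v)
  have "{w. emb v w \<noteq> 0} \<subseteq> (\<lambda>b. [b]) ` {b. v b \<noteq> 0}"
  proof
    fix w assume "w \<in> {w. emb v w \<noteq> 0}"
    then have "length w = 1" "v (hd w) \<noteq> 0"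
      unfolding emb_def by (auto split: if_splits)
    then show "w \<in> (\<lambda>b. [b]) ` {b. v b \<noteq> 0}"
      by (cases w) auto
  qed
  with gen show ?case
    unfolding fsupp_def by (meson finite_imageI finite_subset)
next
  case (add n s t)
  then show ?case
    unfolding fsupp_def by (auto intro: finite_subset[of _ "{x. s x \<noteq> 0} \<union> {x. t x \<noteq> 0}"])
next
  case (scale n s c)
  then show ?case
    unfolding fsupp_def by (auto intro: finite_subset[of _ "{x. s x \<noteq> 0}"])
next
  case (brk p s q t)
  then show ?case
    unfolding gcomm_def by (intro fsupp_diff_scaled fsupp_tmul)
qed

lemma FL_degree_pos: "FL n s \<Longrightarrow> 1 \<le> n"
  by (induction rule: FL.induct) auto

lemma lie_module_act_zero:
  assumes "lie_module sc br act" "fsupp v"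
  shows "act 0 v = (\<lambda>b. 0)"
proof -
  have "act (0 + 0) v = (\<lambda>b. act 0 v b + act 0 v b)"
    using assms unfolding lie_module_def by blast
  then show ?thesis
    by (metis add.right_neutral add_cancel_right_right)
qed

lemma gact_thet_eq_zero:
  assumes "\<And>c. act 0 (delta c) = (\<lambda>b. 0)" "p \<noteq> 1"
  shows "gact act (thet Th p s) t = (\<lambda>w. 0)"
  unfolding gact_def thet_def using assms by simp

lemma mm_gcomm_left:
  assumes "\<And>c. act 0 (delta c) = (\<lambda>b. 0)" "1 \<le> p" "1 \<le> q" "fsupp s" "fsupp t"
  shows "mm act Th (p + q) r (gcomm p q s t) u w
    = - ((-1) ^ ((p + q) * r)) * (gcomm p q (gact act (thet Th r u) s) t w
                                 + gcomm p q s (gact act (thet Th r u) t) w)"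
  unfolding mm_def
  using assms(2,3) by (simp add: gact_thet_eq_zero[where act = act, OF assms(1)] gact_gcomm assms(4,5))

(* The terms of (m \<circ> q + q \<circ> m)(x1 \<and> x2 \<and> x3) in which \<Theta>(x3) acts. *)
definition thet_action_terms ::
    "('g::zero \<Rightarrow> ('b \<Rightarrow> 'k) \<Rightarrow> ('b \<Rightarrow> 'k)) \<Rightarrow> (('b \<Rightarrow> 'k) \<Rightarrow> 'g) \<Rightarrow> nat \<Rightarrow> nat \<Rightarrow> nat
      \<Rightarrow> ('b list \<Rightarrow> 'k::comm_ring_1) \<Rightarrow> ('b list \<Rightarrow> 'k) \<Rightarrow> ('b list \<Rightarrow> 'k) \<Rightarrow> ('b list \<Rightarrow> 'k)" where
  "thet_action_terms act Th p1 p2 p3 x1 x2 x3 = (\<lambda>w.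
       (-1) ^ (p1 * p3 + p2 * p3) * gcomm (p1 + p3 - 1) p2 (gact act (thet Th p3 x3) x1) x2 w
     - (-1) ^ (p1 * (p2 + p3) + p2 * p3) * gcomm (p2 + p3 - 1) p1 (gact act (thet Th p3 x3) x2) x1 w
     - (-1) ^ ((p1 + p2) * p3) * (gcomm p1 p2 (gact act (thet Th p3 x3) x1) x2 w
                                  + gcomm p1 p2 x1 (gact act (thet Th p3 x3) x2) w))"

lemma thet_action_terms_eq_zero:
  assumes "\<And>c. act 0 (delta c) = (\<lambda>b. 0)"
  shows "thet_action_terms act Th p1 p2 p3 x1 x2 x3 = (\<lambda>w. 0)"
proof (cases "p3 = 1")
  case True
  show ?thesis
  proof
    fix w
    let ?D = "gact act (thet Th 1 x3)"
    have "gcomm p2 p1 (?D x2) x1 w = - ((-1) ^ (p1 * p2)) * gcomm p1 p2 x1 (?D x2) w"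
      by (rule gcomm_swap)
    then show "thet_action_terms act Th p1 p2 p3 x1 x2 x3 w = 0"
      unfolding thet_action_terms_def True
      by (simp add: algebra_simps minus_one_power_iff even_add even_mult_iff split: if_splits)
  qed
next
  case False
  then show ?thesis
    unfolding thet_action_terms_def by (simp add: gact_thet_eq_zero[where act = act, OF assms])
qed

lemma comp3_qq_mm_add_comp3_mm_qq:
  assumes act0: "\<And>c. act 0 (delta c) = (\<lambda>b. 0)"
    and "fsupp x1" "fsupp x2" "fsupp x3" "1 \<le> p1" "1 \<le> p2" "1 \<le> p3"
  shows "comp3 qq 0 (mm act Th) p1 p2 p3 x1 x2 x3 w + comp3 (mm act Th) 1 qq p1 p2 p3 x1 x2 x3 w
    = thet_action_terms act Th p1 p2 p3 x1 x2 x3 w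
      - (-1) ^ (p2 * p3) * thet_action_terms act Th p1 p3 p2 x1 x3 x2 w
      + (-1) ^ (p1 * (p2 + p3)) * thet_action_terms act Th p2 p3 p1 x2 x3 x1 w"
  unfolding comp3_def qq_def thet_action_terms_def
  using assms
  by (simp add: mm_gcomm_left[where act = act, OF act0] mm_def[of act Th p1] mm_def[of act Th p2]
      gcomm_diff_scaled_left algebra_simps power_add left_minus_one_mult_self)

theorem mainTheorem8:
  fixes sc :: "'k::field_char_0 \<Rightarrow> 'g::ab_group_add \<Rightarrow> 'g"
    and br :: "'g \<Rightarrow> 'g \<Rightarrow> 'g"
    and act :: "'g \<Rightarrow> ('b \<Rightarrow> 'k) \<Rightarrow> ('b \<Rightarrow> 'k)"
    and Th :: "('b \<Rightarrow> 'k) \<Rightarrow> 'g"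
    and x1 x2 x3 :: "'b list \<Rightarrow> 'k"
    and p1 p2 p3 :: nat
  assumes "lie_leibniz_triple sc br act Th"
    and "FL p1 x1" and "FL p2 x2" and "FL p3 x3"
  shows "KS act Th (p1 + p2 + p3 - 1)
           (\<lambda>w. comp3 qq 0 (mm act Th) p1 p2 p3 x1 x2 x3 w
              + comp3 (mm act Th) 1 qq p1 p2 p3 x1 x2 x3 w)"
proof -
  have "lie_module sc br act"
    using assms(1) unfolding lie_leibniz_triple_def by simp
  then have act0: "act 0 (delta c) = (\<lambda>b. 0)" for c
    by (rule lie_module_act_zero[OF _ fsupp_delta])
  have "comp3 qq 0 (mm act Th) p1 p2 p3 x1 x2 x3 w
      + comp3 (mm act Th) 1 qq p1 p2 p3 x1 x2 x3 w = 0" for w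
    unfolding comp3_qq_mm_add_comp3_mm_qq[where act = act, OF act0
        assms(2-4)[THEN FL_fsupp] assms(2-4)[THEN FL_degree_pos]]
    by (simp add: thet_action_terms_eq_zero[where act = act, OF act0])
  then show ?thesis
    by (simp add: KS.zero)
qed

end
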